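(* Consider an MDP $(\mathcal{S},\mathcal{A},\tau,\mu_0,R_1,\gamma)$ and alternative transition dynamics $\tau':\mathcal{S}\times\mathcal{A}\to\Delta(\mathcal{S})$. Then for any function $\mathcal{L}:\mathcal{S}\times\mathcal{A}\to\mathbb{R}$ there exists a reward function $R_2:\mathcal{S}\times\mathcal{A}\times\mathcal{S}\to\mathbb{R}$ such that $\mathbb{E}_{S'\sim\tau(s,a)}[R_2(s,a,S')]=\mathbb{E}_{S'\sim\tau(s,a)}[R_1(s,a,S')]$ for all $s\in\mathcal{S},a\in\mathcal{A}$ (i.e. $R_2$ is produced from $R_1$ by $S'$-redistribution under $\tau$), and $\mathbb{E}_{S'\sim\tau'(s,a)}[R_2(s,a,S')]=\mathcal{L}(s,a)$ for all $(s,a)$ with $\tau(s,a)\neq\tau'(s,a)$.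
   Context: An MDP is $(\mathcal{S},\mathcal{A},\tau,\mu_0,R,\gamma)$ with finite state set $\mathcal{S}$, finite action set $\mathcal{A}$, transition dynamics $\tau:\mathcal{S}\times\mathcal{A}\to\Delta(\mathcal{S})$, initial distribution $\mu_0\in\Delta(\mathcal{S})$, reward $R:\mathcal{S}\times\mathcal{A}\times\mathcal{S}\to\mathbb{R}$, and $\gamma\in(0,1)$. *)

theory Defs
  imports "HOL-Probability.Probability"
begin

definition exp_reward :: "('s \<Rightarrow> 'a \<Rightarrow> 's pmf) \<Rightarrow> ('s \<Rightarrow> 'a \<Rightarrow> 's \<Rightarrow> real) \<Rightarrow> 's \<Rightarrow> 'a \<Rightarrow> real" where
  "exp_reward tau R s a = measure_pmf.expectation (tau s a) (\<lambda>s'. R s a s')"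

end

theory Submission
  imports Defs
begin

text \<open>Two distinct distributions p and q differ at some state x, so a function
  affine in the indicator of x can be tuned to have any prescribed pair of expectations
  under p and q. Choosing such a reward wherever the dynamics tau and tau' disagree, and keeping
  R1 elsewhere, gives R2.\<close>

lemma expectation_affine_indicator:
  fixes p :: "'s pmf"
  shows "measure_pmf.expectation p (\<lambda>y. c + d * indicator {x} y) = c + d * pmf p x"
proof -
  have "measure_pmf.expectation p (\<lambda>y. c + d * indicator {x} y)
      = c + d * measure_pmf.expectation p (indicator {x})"
    by (subst Bochner_Integration.integral_add)
      (simp_all add: measure_pmf.integrable_const_bound[where B=1])
  also have "measure_pmf.expectation p (indicator {x}) = pmf p x"
    by (simp add: measure_pmf_single)
  finally show ?thesis .
qed

lemma pmf_neq_imp_expectations_prescribable: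
  fixes p q :: "'s pmf"
  assumes "p \<noteq> q"
  shows "\<exists>f. measure_pmf.expectation p f = (A :: real) \<and> measure_pmf.expectation q f = B"
proof -
  obtain x where x: "pmf p x \<noteq> pmf q x"
    using assms pmf_eqI by metis
  define d where "d = (A - B) / (pmf p x - pmf q x)"
  define c where "c = A - d * pmf p x"
  have "d * (pmf p x - pmf q x) = A - B"
    using x unfolding d_def by simp
  then have "c + d * pmf q x = B"
    unfolding c_def by (simp add: algebra_simps)
  moreover have "c + d * pmf p x = A"
    unfolding c_def by simp
  ultimately show ?thesis
    using expectation_affine_indicator[of p c d x] expectation_affine_indicator[of q c d x]
    by metis
qed

theorem theorem4p1:
  fixes tau tau' :: "'s::finite \<Rightarrow> 'a::finite \<Rightarrow> 's pmf"
    and mu0 :: "'s pmf"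
    and R1 :: "'s \<Rightarrow> 'a \<Rightarrow> 's \<Rightarrow> real"
    and gamma :: real
    and L :: "'s \<Rightarrow> 'a \<Rightarrow> real"
  assumes "0 < gamma" and "gamma < 1"
  shows "\<exists>R2 :: 's \<Rightarrow> 'a \<Rightarrow> 's \<Rightarrow> real.
           (\<forall>s a. exp_reward tau R2 s a = exp_reward tau R1 s a) \<and>
           (\<forall>s a. tau s a \<noteq> tau' s a \<longrightarrow> exp_reward tau' R2 s a = L s a)"
proof -
  have "\<forall>s a. \<exists>f. tau s a \<noteq> tau' s a \<longrightarrow>
      measure_pmf.expectation (tau s a) f = exp_reward tau R1 s a \<and>
      measure_pmf.expectation (tau' s a) f = L s a"
    using pmf_neq_imp_expectations_prescribable by blast
  then obtain F where F: "\<And>s a. tau s a \<noteq> tau' s a \<Longrightarrow>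
      exp_reward tau F s a = exp_reward tau R1 s a \<and> exp_reward tau' F s a = L s a"
    unfolding exp_reward_def by metis
  define R2 where "R2 s a = (if tau s a = tau' s a then R1 s a else F s a)" for s a
  have "exp_reward tau R2 s a = exp_reward tau R1 s a" for s a
    using F[of s a] by (cases "tau s a = tau' s a") (simp_all add: R2_def exp_reward_def)
  moreover have "exp_reward tau' R2 s a = L s a" if "tau s a \<noteq> tau' s a" for s a
    using F[OF that] that by (simp add: R2_def exp_reward_def)
  ultimately show ?thesis
    by blast
qed

end
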